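(* Let $k$ be an infinite field and $n\geq 1$. Then the canonical homomorphism $\mathrm{BCr}_n(k)\to\mathrm{Sym}(\mathbb{P}^n(k))$ is injective.
   Context: $\mathrm{BCr}_n(k)$ is the group of birational self-maps $f$ of $\mathbb{P}^n$ over $k$ such that both $f$ and $f^{-1}$ are defined at every point of $\mathbb{P}^n(k)$; the canonical homomorphism sends $f$ to the permutation it induces on $\mathbb{P}^n(k)$. *)

theory Defs
  imports Main "HOL-Library.Poly_Mapping"
begin

text \<open>Polynomials in the variables x_0, x_1, ... over k, as finitely supported maps
  from monomials (exponent vectors nat =>0 nat) to coefficients.\<close>
type_synonym 'k mpol = "(nat \<Rightarrow>\<^sub>0 nat) \<Rightarrow>\<^sub>0 'k"

definition mon_deg :: "(nat \<Rightarrow>\<^sub>0 nat) \<Rightarrow> nat" where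
  "mon_deg m = (\<Sum>i\<in>Poly_Mapping.keys m. Poly_Mapping.lookup m i)"

definition mvar :: "nat \<Rightarrow> 'k::comm_ring_1 mpol" where
  "mvar i = Poly_Mapping.single (Poly_Mapping.single i 1) 1"

definition mconst :: "'k::comm_ring_1 \<Rightarrow> 'k mpol" where
  "mconst c = Poly_Mapping.single 0 c"

definition meval :: "'k::comm_ring_1 mpol \<Rightarrow> (nat \<Rightarrow> 'k) \<Rightarrow> 'k" where
  "meval p x = (\<Sum>m\<in>Poly_Mapping.keys p. Poly_Mapping.lookup p m * (\<Prod>i\<in>Poly_Mapping.keys m. x i ^ Poly_Mapping.lookup m i))"

definition msubst :: "'k::comm_ring_1 mpol \<Rightarrow> (nat \<Rightarrow> 'k mpol) \<Rightarrow> 'k mpol" where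
  "msubst p g = (\<Sum>m\<in>Poly_Mapping.keys p. mconst (Poly_Mapping.lookup p m) * (\<Prod>i\<in>Poly_Mapping.keys m. g i ^ Poly_Mapping.lookup m i))"

definition homogeneous :: "nat \<Rightarrow> 'k::comm_ring_1 mpol \<Rightarrow> bool" where
  "homogeneous d p \<longleftrightarrow> (\<forall>m\<in>Poly_Mapping.keys p. mon_deg m = d)"

definition mpol_in :: "nat \<Rightarrow> 'k::comm_ring_1 mpol \<Rightarrow> bool" where
  "mpol_in n p \<longleftrightarrow> (\<forall>m\<in>Poly_Mapping.keys p. Poly_Mapping.keys m \<subseteq> {..n})"

text \<open>A representative (F_0 : ... : F_n) of a rational self-map of P^n over k:
  homogeneous polynomials of a common degree in x_0..x_n, not all zero.\<close>
definition hom_tuple :: "nat \<Rightarrow> (nat \<Rightarrow> 'k::comm_ring_1 mpol) \<Rightarrow> bool" where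
  "hom_tuple n F \<longleftrightarrow> (\<exists>d. \<forall>i\<le>n. homogeneous d (F i)) \<and> (\<forall>i\<le>n. mpol_in n (F i))
     \<and> (\<exists>i\<le>n. F i \<noteq> 0) \<and> (\<forall>i>n. F i = 0)"

text \<open>Two representatives define the same rational map.\<close>
definition rm_equiv :: "nat \<Rightarrow> (nat \<Rightarrow> 'k::comm_ring_1 mpol) \<Rightarrow> (nat \<Rightarrow> 'k mpol) \<Rightarrow> bool" where
  "rm_equiv n F G \<longleftrightarrow> (\<forall>i\<le>n. \<forall>j\<le>n. F i * G j = F j * G i)"

definition rm_id :: "nat \<Rightarrow> nat \<Rightarrow> 'k::comm_ring_1 mpol" where
  "rm_id n i = (if i \<le> n then mvar i else 0)"

definition rm_comp :: "(nat \<Rightarrow> 'k::comm_ring_1 mpol) \<Rightarrow> (nat \<Rightarrow> 'k mpol) \<Rightarrow> nat \<Rightarrow> 'k mpol" where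
  "rm_comp F G i = msubst (F i) G"

definition birational_inverse :: "nat \<Rightarrow> (nat \<Rightarrow> 'k::comm_ring_1 mpol) \<Rightarrow> (nat \<Rightarrow> 'k mpol) \<Rightarrow> bool" where
  "birational_inverse n F G \<longleftrightarrow> hom_tuple n F \<and> hom_tuple n G
     \<and> hom_tuple n (rm_comp F G) \<and> hom_tuple n (rm_comp G F)
     \<and> rm_equiv n (rm_comp G F) (rm_id n) \<and> rm_equiv n (rm_comp F G) (rm_id n)"

text \<open>Points of P^n(k): nonzero vectors (x_0, ..., x_n), coordinates beyond n equal 0.\<close>
definition proj_point :: "nat \<Rightarrow> (nat \<Rightarrow> 'k::field) \<Rightarrow> bool" where
  "proj_point n x \<longleftrightarrow> (\<forall>i>n. x i = 0) \<and> (\<exists>i\<le>n. x i \<noteq> 0)"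

definition proj_eq :: "nat \<Rightarrow> (nat \<Rightarrow> 'k::field) \<Rightarrow> (nat \<Rightarrow> 'k) \<Rightarrow> bool" where
  "proj_eq n x y \<longleftrightarrow> (\<exists>c. c \<noteq> 0 \<and> (\<forall>i\<le>n. y i = c * x i))"

definition defined_at :: "nat \<Rightarrow> (nat \<Rightarrow> 'k::field mpol) \<Rightarrow> (nat \<Rightarrow> 'k) \<Rightarrow> bool" where
  "defined_at n F x \<longleftrightarrow> (\<exists>F'. hom_tuple n F' \<and> rm_equiv n F F' \<and> (\<exists>i\<le>n. meval (F' i) x \<noteq> 0))"

definition maps_to :: "nat \<Rightarrow> (nat \<Rightarrow> 'k::field mpol) \<Rightarrow> (nat \<Rightarrow> 'k) \<Rightarrow> (nat \<Rightarrow> 'k) \<Rightarrow> bool" where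
  "maps_to n F x y \<longleftrightarrow> (\<exists>F'. hom_tuple n F' \<and> rm_equiv n F F' \<and> (\<exists>i\<le>n. meval (F' i) x \<noteq> 0)
       \<and> proj_eq n (\<lambda>i. meval (F' i) x) y)"

definition BCr :: "nat \<Rightarrow> (nat \<Rightarrow> 'k::field mpol) \<Rightarrow> bool" where
  "BCr n F \<longleftrightarrow> (\<exists>G. birational_inverse n F G
      \<and> (\<forall>x. proj_point n x \<longrightarrow> defined_at n F x)
      \<and> (\<forall>x. proj_point n x \<longrightarrow> defined_at n G x))"

end

theory Submission imports Defs "HOL-Computational_Algebra.Polynomial"
begin

text \<open>Two elements of \<open>BCr\<^sub>n(k)\<close> inducing the same permutation of \<open>P\<^sup>n(k)\<close> have
  proportional value vectors at every point, so every \<open>2 \<times> 2\<close> minor \<open>F\<^sub>i G\<^sub>j - F\<^sub>j G\<^sub>i\<close>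
  vanishes on \<open>k\<^sup>n\<^sup>+\<^sup>1 - {0}\<close>.  Over an infinite field such a polynomial is zero: the
  Kronecker substitution \<open>x\<^sub>i \<mapsto> t^(D^i)\<close>, with \<open>D\<close> exceeding every exponent, turns it
  into a univariate polynomial with the same coefficients and infinitely many roots.
  Only the polynomial representatives of \<open>F\<close> and \<open>G\<close> enter.\<close>

definition mon_eval :: "(nat \<Rightarrow>\<^sub>0 nat) \<Rightarrow> (nat \<Rightarrow> 'k::comm_ring_1) \<Rightarrow> 'k" where
  "mon_eval m x = (\<Prod>i\<in>Poly_Mapping.keys m. x i ^ Poly_Mapping.lookup m i)"

lemma mon_eval_eq_prod_superset:
  assumes "finite S" "Poly_Mapping.keys m \<subseteq> S"
  shows "mon_eval m x = (\<Prod>i\<in>S. x i ^ Poly_Mapping.lookup m i)"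
  unfolding mon_eval_def
  by (rule prod.mono_neutral_left[OF assms]) (auto simp: in_keys_iff)

lemma mon_eval_add: "mon_eval (a + b) x = mon_eval a x * mon_eval b x"
proof -
  let ?S = "Poly_Mapping.keys a \<union> Poly_Mapping.keys b"
  have "mon_eval (a + b) x = (\<Prod>i\<in>?S. x i ^ Poly_Mapping.lookup (a + b) i)"
    by (rule mon_eval_eq_prod_superset) (auto dest: keys_add[THEN subsetD])
  also have "\<dots> = (\<Prod>i\<in>?S. x i ^ Poly_Mapping.lookup a i * x i ^ Poly_Mapping.lookup b i)"
    by (simp add: lookup_add power_add)
  also have "\<dots> = mon_eval a x * mon_eval b x"
    by (simp add: prod.distrib mon_eval_eq_prod_superset[of ?S a] mon_eval_eq_prod_superset[of ?S b])
  finally show ?thesis .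
qed

lemma meval_eq_sum_mon_eval:
  "meval p x = (\<Sum>m\<in>Poly_Mapping.keys p. Poly_Mapping.lookup p m * mon_eval m x)"
  unfolding meval_def mon_eval_def ..

lemma meval_add: "meval (p + q) x = meval p x + meval q x"
  unfolding meval_eq_sum_mon_eval
  by (rule setsum_keys_plus_distrib) (simp_all add: distrib_right)

lemma meval_zero [simp]: "meval 0 x = 0"
  by (simp add: meval_def)

lemma meval_sum: "meval (\<Sum>a\<in>A. f a) x = (\<Sum>a\<in>A. meval (f a) x)"
  by (induction A rule: infinite_finite_induct) (auto simp: meval_add)

lemma meval_single: "meval (Poly_Mapping.single m c) x = c * mon_eval m x"
  by (simp add: meval_eq_sum_mon_eval)

lemma poly_mapping_sum_single_lookup:
  "(\<Sum>m\<in>Poly_Mapping.keys p. Poly_Mapping.single m (Poly_Mapping.lookup p m)) = p"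
  by (rule poly_mapping_eqI)
    (auto simp: lookup_sum lookup_single when_def in_keys_iff sum.delta[where 'b='b] intro: sum.neutral)

lemma meval_mult: "meval (p * q) x = meval p x * meval q x"
proof -
  let ?P = "Poly_Mapping.keys p" and ?Q = "Poly_Mapping.keys q"
  have "p * q = (\<Sum>m\<in>?P. Poly_Mapping.single m (Poly_Mapping.lookup p m)) *
                (\<Sum>m'\<in>?Q. Poly_Mapping.single m' (Poly_Mapping.lookup q m'))"
    by (simp only: poly_mapping_sum_single_lookup)
  also have "\<dots> = (\<Sum>m\<in>?P. \<Sum>m'\<in>?Q.
      Poly_Mapping.single (m + m') (Poly_Mapping.lookup p m * Poly_Mapping.lookup q m'))"
    by (simp only: sum_product mult_single)
  finally have "meval (p * q) x = (\<Sum>m\<in>?P. \<Sum>m'\<in>?Q.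
      Poly_Mapping.lookup p m * Poly_Mapping.lookup q m' * (mon_eval m x * mon_eval m' x))"
    by (simp add: meval_sum meval_single mon_eval_add)
  also have "\<dots> = meval p x * meval q x"
    by (simp only: meval_eq_sum_mon_eval sum_product mult_ac)
  finally show ?thesis .
qed

lemma meval_diff: "meval (p - q) x = meval p x - meval (q :: 'k::comm_ring_1 mpol) x"
  using meval_add[of "p - q" q x] by simp

lemma mpol_in_mult:
  assumes "mpol_in n p" "mpol_in n q"
  shows "mpol_in n (p * q)"
  unfolding mpol_in_def
proof
  fix m
  assume "m \<in> Poly_Mapping.keys (p * q)"
  then obtain a b where "m = a + b" "a \<in> Poly_Mapping.keys p" "b \<in> Poly_Mapping.keys q"
    using keys_mult by blast
  then show "Poly_Mapping.keys m \<subseteq> {..n}"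
    using assms keys_add[of a b] unfolding mpol_in_def by blast
qed

lemma mpol_in_diff: "mpol_in n p \<Longrightarrow> mpol_in n q \<Longrightarrow> mpol_in n (p - q)"
  unfolding mpol_in_def using keys_diff[of p q] by blast

lemma lookup_le_mon_deg: "Poly_Mapping.lookup m i \<le> mon_deg m"
  unfolding mon_deg_def
  by (cases "i \<in> Poly_Mapping.keys m") (auto intro: member_le_sum simp: in_keys_iff)

lemma base_expansion_unique:
  fixes a b :: "nat \<Rightarrow> nat"
  assumes "\<forall>i\<le>n. a i < D" "\<forall>i\<le>n. b i < D"
    and "(\<Sum>i\<le>n. a i * D ^ i) = (\<Sum>i\<le>n. b i * D ^ i)"
  shows "\<forall>i\<le>n. a i = b i"
  using assms
proof (induction n arbitrary: a b)
  case 0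
  then show ?case by simp
next
  case (Suc n)
  have expand: "(\<Sum>i\<le>Suc n. c i * D ^ i) = c 0 + D * (\<Sum>i\<le>n. c (Suc i) * D ^ i)"
    for c :: "nat \<Rightarrow> nat"
    unfolding sum.atMost_Suc_shift by (simp add: sum_distrib_left mult_ac)
  have lowest_digit: "a0 = b0 \<and> X = Y"
    if "a0 < D" "b0 < D" "a0 + D * X = b0 + D * Y" for a0 b0 X Y :: nat
  proof -
    have "D > 0"
      using that(1) by simp
    then show ?thesis
      using arg_cong[OF that(3), of "\<lambda>s. s mod D"] arg_cong[OF that(3), of "\<lambda>s. s div D"] that(1,2)
      by simp
  qed
  have "a 0 < D" "b 0 < D" and digits_hi: "\<forall>i\<le>n. a (Suc i) < D" "\<forall>i\<le>n. b (Suc i) < D"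
    using Suc.prems(1,2) by auto
  moreover have "a 0 + D * (\<Sum>i\<le>n. a (Suc i) * D ^ i) = b 0 + D * (\<Sum>i\<le>n. b (Suc i) * D ^ i)"
    using Suc.prems(3) unfolding expand .
  ultimately have "a 0 = b 0" and "\<forall>i\<le>n. a (Suc i) = b (Suc i)"
    using Suc.IH[OF digits_hi] lowest_digit by blast+
  then show ?case
    by (metis le_zero_eq not0_implies_Suc Suc_le_mono)
qed

definition kronecker_exponent :: "nat \<Rightarrow> nat \<Rightarrow> (nat \<Rightarrow>\<^sub>0 nat) \<Rightarrow> nat" where
  "kronecker_exponent D n m = (\<Sum>i\<le>n. Poly_Mapping.lookup m i * D ^ i)"

definition kronecker_subst :: "nat \<Rightarrow> nat \<Rightarrow> 'k::comm_ring_1 mpol \<Rightarrow> 'k poly" where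
  "kronecker_subst D n p =
     (\<Sum>m\<in>Poly_Mapping.keys p. monom (Poly_Mapping.lookup p m) (kronecker_exponent D n m))"

lemma inj_on_kronecker_exponent:
  "inj_on (kronecker_exponent D n)
     {m. Poly_Mapping.keys m \<subseteq> {..n} \<and> (\<forall>i. Poly_Mapping.lookup m i < D)}"
proof (rule inj_onI)
  fix m m'
  assume m: "m \<in> {m. Poly_Mapping.keys m \<subseteq> {..n} \<and> (\<forall>i. Poly_Mapping.lookup m i < D)}"
    and m': "m' \<in> {m. Poly_Mapping.keys m \<subseteq> {..n} \<and> (\<forall>i. Poly_Mapping.lookup m i < D)}"
    and eq: "kronecker_exponent D n m = kronecker_exponent D n m'"
  have "\<forall>i\<le>n. Poly_Mapping.lookup m i = Poly_Mapping.lookup m' i"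
    using base_expansion_unique[of n "Poly_Mapping.lookup m" D "Poly_Mapping.lookup m'"] m m' eq
    unfolding kronecker_exponent_def by blast
  moreover have "Poly_Mapping.lookup m i = 0" "Poly_Mapping.lookup m' i = 0" if "\<not> i \<le> n" for i
    using m m' that by (auto simp: in_keys_iff)
  ultimately show "m = m'"
    by (metis poly_mapping_eqI)
qed

lemma mon_eval_kronecker_point:
  assumes "Poly_Mapping.keys m \<subseteq> {..n}"
  shows "mon_eval m (\<lambda>i. if i \<le> n then t ^ D ^ i else 0) = t ^ kronecker_exponent D n m"
proof -
  have "mon_eval m (\<lambda>i. if i \<le> n then t ^ D ^ i else 0) =
      (\<Prod>i\<le>n. (if i \<le> n then t ^ D ^ i else 0) ^ Poly_Mapping.lookup m i)"
    by (rule mon_eval_eq_prod_superset) (use assms in auto)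
  also have "\<dots> = (\<Prod>i\<le>n. t ^ (Poly_Mapping.lookup m i * D ^ i))"
    by (simp add: power_mult[symmetric] mult.commute)
  also have "\<dots> = t ^ kronecker_exponent D n m"
    by (simp add: kronecker_exponent_def power_sum)
  finally show ?thesis .
qed

lemma poly_kronecker_subst:
  assumes "mpol_in n p"
  shows "poly (kronecker_subst D n p) t = meval p (\<lambda>i. if i \<le> n then t ^ D ^ i else 0)"
  unfolding kronecker_subst_def meval_eq_sum_mon_eval poly_sum poly_monom
  using assms by (auto simp: mpol_in_def mon_eval_kronecker_point intro: sum.cong)

lemma coeff_kronecker_subst:
  assumes "inj_on (kronecker_exponent D n) (Poly_Mapping.keys p)" "m \<in> Poly_Mapping.keys p"
  shows "coeff (kronecker_subst D n p) (kronecker_exponent D n m) = Poly_Mapping.lookup p m"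
proof -
  have "coeff (kronecker_subst D n p) (kronecker_exponent D n m) =
      (\<Sum>m'\<in>Poly_Mapping.keys p. if m' = m then Poly_Mapping.lookup p m' else 0)"
    unfolding kronecker_subst_def coeff_sum coeff_monom
    by (rule sum.cong) (use assms in \<open>auto simp: inj_on_eq_iff\<close>)
  also have "\<dots> = Poly_Mapping.lookup p m"
    using assms(2) by simp
  finally show ?thesis .
qed

lemma kronecker_subst_eq_0_iff:
  assumes "inj_on (kronecker_exponent D n) (Poly_Mapping.keys p)"
  shows "kronecker_subst D n p = 0 \<longleftrightarrow> p = 0"
proof
  assume "kronecker_subst D n p = 0"
  then have "Poly_Mapping.lookup p m = 0" if "m \<in> Poly_Mapping.keys p" for m
    using coeff_kronecker_subst[OF assms that] by simp
  then show "p = 0"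
    by (metis in_keys_iff lookup_zero poly_mapping_eqI)
qed (simp add: kronecker_subst_def)

lemma mpol_eq_0_if_vanishes_on_proj_points:
  fixes p :: "'k::field mpol"
  assumes "infinite (UNIV :: 'k set)" and "mpol_in n p"
    and vanishes: "\<forall>x. proj_point n x \<longrightarrow> meval p x = 0"
  shows "p = 0"
proof -
  define D where "D = Suc (Max (mon_deg ` Poly_Mapping.keys p))"
  have exponent_bound: "\<forall>i. Poly_Mapping.lookup m i < D" if "m \<in> Poly_Mapping.keys p" for m
  proof
    fix i
    have "Poly_Mapping.lookup m i \<le> mon_deg m"
      by (rule lookup_le_mon_deg)
    also have "\<dots> \<le> Max (mon_deg ` Poly_Mapping.keys p)"
      using that by (intro Max_ge) auto
    finally show "Poly_Mapping.lookup m i < D"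
      unfolding D_def by simp
  qed
  have inj: "inj_on (kronecker_exponent D n) (Poly_Mapping.keys p)"
    by (rule inj_on_subset[OF inj_on_kronecker_exponent])
      (use assms(2) exponent_bound in \<open>auto simp: mpol_in_def\<close>)
  have "kronecker_subst D n p = 0"
  proof (rule ccontr)
    assume "kronecker_subst D n p \<noteq> 0"
    then have "finite {t. poly (kronecker_subst D n p) t = 0}"
      by (rule poly_roots_finite)
    moreover have "UNIV - {0} \<subseteq> {t. poly (kronecker_subst D n p) t = 0}"
    proof
      fix t :: 'k
      assume "t \<in> UNIV - {0}"
      then have "proj_point n (\<lambda>i. if i \<le> n then t ^ D ^ i else 0)"
        unfolding proj_point_def by auto
      then show "t \<in> {t. poly (kronecker_subst D n p) t = 0}"
        using vanishes poly_kronecker_subst[OF assms(2)] by simp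
    qed
    ultimately show False
      using assms(1) by (meson Diff_infinite_finite finite.emptyI finite.insertI finite_subset)
  qed
  then show "p = 0"
    using kronecker_subst_eq_0_iff[OF inj] by simp
qed

lemma BCr_hom_tuple: "BCr n F \<Longrightarrow> hom_tuple n F"
  unfolding BCr_def birational_inverse_def by blast

lemma maps_to_values:
  assumes "hom_tuple n F" "i \<le> n" "meval (F i) x \<noteq> 0"
  shows "maps_to n F x (\<lambda>i. meval (F i) x)"
proof -
  have "rm_equiv n F F"
    unfolding rm_equiv_def by (simp add: mult.commute)
  moreover have "proj_eq n (\<lambda>i. meval (F i) x) (\<lambda>i. meval (F i) x)"
    unfolding proj_eq_def by (rule exI[of _ 1]) simp
  ultimately show ?thesis
    unfolding maps_to_def using assms by blast
qed

lemma maps_to_cross_mult_eq: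
  assumes "maps_to n G x y" "i \<le> n" "j \<le> n"
  shows "y i * meval (G j) x = y j * meval (G i) x"
proof -
  obtain G' c where equiv: "rm_equiv n G G'" and "\<forall>i\<le>n. y i = c * meval (G' i) x"
    using assms(1) unfolding maps_to_def proj_eq_def by blast
  moreover have "meval (G i) x * meval (G' j) x = meval (G j) x * meval (G' i) x"
    using equiv assms(2,3) unfolding rm_equiv_def by (metis meval_mult)
  ultimately show ?thesis
    using assms(2,3) by (simp add: mult_ac)
qed

lemma meval_minor_vanishes:
  assumes "hom_tuple n F" and agree: "\<forall>y. maps_to n F x y \<longrightarrow> maps_to n G x y"
    and "i \<le> n" "j \<le> n"
  shows "meval (F i * G j - F j * G i) x = 0"
proof (cases "\<exists>a\<le>n. meval (F a) x \<noteq> 0")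
  case True
  then have "maps_to n G x (\<lambda>i. meval (F i) x)"
    using agree maps_to_values[OF assms(1)] by blast
  then show ?thesis
    using maps_to_cross_mult_eq assms(3,4) by (simp add: meval_diff meval_mult)
next
  case False
  then show ?thesis
    using assms(3,4) by (simp add: meval_diff meval_mult)
qed

theorem proposition4p19:
  fixes n :: nat and F G :: "nat \<Rightarrow> 'k::field mpol"
  assumes "infinite (UNIV :: 'k set)" and "n \<ge> 1"
    and "BCr n F" and "BCr n G"
    and "\<forall>x y. proj_point n x \<longrightarrow> (maps_to n F x y \<longleftrightarrow> maps_to n G x y)"
  shows "rm_equiv n F G"
  unfolding rm_equiv_def
proof (intro allI impI)
  fix i j
  assume ij: "i \<le> n" "j \<le> n"
  have hF: "hom_tuple n F" and hG: "hom_tuple n G"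
    using BCr_hom_tuple assms(3,4) by blast+
  have "F i * G j - F j * G i = 0"
  proof (rule mpol_eq_0_if_vanishes_on_proj_points[OF assms(1)])
    show "mpol_in n (F i * G j - F j * G i)"
      using hF hG ij by (auto simp: hom_tuple_def intro!: mpol_in_diff mpol_in_mult)
    show "\<forall>x. proj_point n x \<longrightarrow> meval (F i * G j - F j * G i) x = 0"
      using meval_minor_vanishes[OF hF _ ij] assms(5) by blast
  qed
  then show "F i * G j = F j * G i"
    by simp
qed

end
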